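(* Let $n>0$ be an integer and $S\subseteq\mathbb{N}^{\mathbb{N}}$. Suppose $S=\bigcup_{i\in\mathbb{N}}\bigcap_{j\in\mathbb{N}}X_{ij}=\bigcap_{i\in\mathbb{N}}\bigcup_{j\in\mathbb{N}}Y_{ij}$, where all $X_{ij}$ and $Y_{ij}$ are $\mathbf{\Delta}^0_n$ subsets of $\mathbb{N}^{\mathbb{N}}$. Then there is a single family $(Z_{ij})_{i,j\in\mathbb{N}}$ of $\mathbf{\Delta}^0_n$ sets such that $S=\bigcup_{i\in\mathbb{N}}\bigcap_{j\in\mathbb{N}}Z_{ij}=\bigcap_{i\in\mathbb{N}}\bigcup_{j\in\mathbb{N}}Z_{ij}$.
   Context: Baire space $\mathbb{N}^{\mathbb{N}}$ carries the product of discrete topologies; $\mathbf{\Delta}^0_n$ denotes the boldface Borel pointclass (sets that are both $\mathbf{\Sigma}^0_n$ and $\mathbf{\Pi}^0_n$). *)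

theory Defs
  imports "HOL-Analysis.Analysis"
begin

(* Level 0 is unused (empty). *)
fun Sigma0 :: "nat \<Rightarrow> ('a::topological_space) set set" where
  "Sigma0 0 = {}"
| "Sigma0 (Suc 0) = {U. open U}"
| "Sigma0 (Suc (Suc n)) = {\<Union>i::nat. A i | A. \<forall>i. - A i \<in> Sigma0 (Suc n)}"

definition Pi0 :: "nat \<Rightarrow> ('a::topological_space) set set" where
  "Pi0 n = {U. - U \<in> Sigma0 n}"

definition Delta0 :: "nat \<Rightarrow> ('a::topological_space) set set" where
  "Delta0 n = Sigma0 n \<inter> Pi0 n"

(* Baire space: nat => nat with the product topology (library instance for
   function spaces) of the discrete topology on nat. *)
type_synonym baire = "nat \<Rightarrow> nat"

end

theory Submission
  imports Defs "HOL-Library.Nat_Bijection"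
begin

(* For every triple (a, b, m) take
   the row  R_abm 0 = Y_bm,  R_abm (k+1) = "if Y_bm then X_ak else Y_bk".
   Its intersection is Y_bm \<inter> (INT k. X_ak) and its union is (UN k. Y_bk);
   hence the union of the row intersections and the intersection of the row
   unions are both S.  Enumerating the triples by nat gives Z.  The only
   property of Delta^0_n used is closure under this set conditional. *)

lemma UN_surj_reindex: "surj g \<Longrightarrow> (\<Union>i. F (g i)) = (\<Union>p. F p)"
  by (simp add: image_image[of F g UNIV, symmetric])

lemma INT_surj_reindex: "surj g \<Longrightarrow> (\<Inter>i. F (g i)) = (\<Inter>p. F p)"
  by (simp add: image_image[of F g UNIV, symmetric])

(* At level p+2 both operations are taken termwise over all
   pairs of indices; the complements of the terms are then intersections resp.
   unions of level-(p+1) sets, so the two operations need one simultaneous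
   induction. *)
lemma Sigma0_Un_Int:
  fixes A B :: "'a::topological_space set"
  assumes "A \<in> Sigma0 (Suc p)" "B \<in> Sigma0 (Suc p)"
  shows "A \<union> B \<in> Sigma0 (Suc p) \<and> A \<inter> B \<in> Sigma0 (Suc p)"
  using assms
proof (induction p arbitrary: A B)
  case 0
  then show ?case by auto
next
  case (Suc p)
  from Suc.prems obtain FA FB :: "nat \<Rightarrow> 'a set"
    where A: "A = (\<Union>i. FA i)" "\<forall>i. - FA i \<in> Sigma0 (Suc p)"
      and B: "B = (\<Union>i. FB i)" "\<forall>i. - FB i \<in> Sigma0 (Suc p)"
    by auto
  define U I where "U k = FA (fst (prod_decode k)) \<union> FB (snd (prod_decode k))"
    and "I k = FA (fst (prod_decode k)) \<inter> FB (snd (prod_decode k))" for k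
  have "(\<Union>k. U k) = (\<Union>q. FA (fst q) \<union> FB (snd q))"
    "(\<Union>k. I k) = (\<Union>q. FA (fst q) \<inter> FB (snd q))"
    unfolding U_def I_def
    using UN_surj_reindex[OF surj_prod_decode, of "\<lambda>q. FA (fst q) \<union> FB (snd q)"]
      UN_surj_reindex[OF surj_prod_decode, of "\<lambda>q. FA (fst q) \<inter> FB (snd q)"] by simp_all
  then have "A \<union> B = (\<Union>k. U k)" "A \<inter> B = (\<Union>k. I k)"
    using A(1) B(1) by auto
  moreover have "- U k \<in> Sigma0 (Suc p)" "- I k \<in> Sigma0 (Suc p)" for k
    using Suc.IH[OF A(2)[rule_format] B(2)[rule_format]] by (simp_all add: U_def I_def)
  ultimately show ?case
    by auto
qed

definition set_ite :: "'a set \<Rightarrow> 'a set \<Rightarrow> 'a set \<Rightarrow> 'a set" where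
  "set_ite A B C = (A \<inter> B) \<union> (- A \<inter> C)"

lemma mem_set_ite [simp]: "x \<in> set_ite A B C \<longleftrightarrow> (if x \<in> A then x \<in> B else x \<in> C)"
  by (auto simp: set_ite_def)

(* Delta^0_k is closed under the set conditional, being closed under complement
   and, by Sigma0_Un_Int applied to the sets and their complements, under
   binary union and intersection. *)
lemma Delta0_set_ite:
  fixes A B C :: "'a::topological_space set"
  assumes "A \<in> Delta0 k" "B \<in> Delta0 k" "C \<in> Delta0 k"
  shows "set_ite A B C \<in> Delta0 k"
proof -
  have "k \<noteq> 0"
    using assms(1) by (metis Delta0_def IntD1 Sigma0.simps(1) empty_iff)
  then obtain p where k: "k = Suc p"
    using not0_implies_Suc by blast
  have Un_Int: "P \<union> Q \<in> Delta0 k \<and> P \<inter> Q \<in> Delta0 k"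
    if "P \<in> Delta0 k" "Q \<in> Delta0 k" for P Q :: "'a set"
    using that Sigma0_Un_Int[where A = P and B = Q] Sigma0_Un_Int[where A = "- P" and B = "- Q"] unfolding k
    by (simp add: Delta0_def Pi0_def)
  have "- A \<in> Delta0 k"
    using assms(1) by (simp add: Delta0_def Pi0_def)
  then show ?thesis
    using assms Un_Int unfolding set_ite_def by meson
qed

lemma UNIV_nat_0_Suc: "(UNIV :: nat set) = insert 0 (range Suc)"
  using not0_implies_Suc by auto

definition merged_row ::
    "(nat \<Rightarrow> nat \<Rightarrow> 'a set) \<Rightarrow> (nat \<Rightarrow> nat \<Rightarrow> 'a set) \<Rightarrow> nat \<Rightarrow> nat \<Rightarrow> nat \<Rightarrow> nat \<Rightarrow> 'a set"
  where "merged_row X Y a b m j =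
    (case j of 0 \<Rightarrow> Y b m | Suc k \<Rightarrow> set_ite (Y b m) (X a k) (Y b k))"

lemma merged_row_Inter: "(\<Inter>j. merged_row X Y a b m j) = Y b m \<inter> (\<Inter>k. X a k)"
proof -
  have "(\<Inter>j. merged_row X Y a b m j) = merged_row X Y a b m 0 \<inter> (\<Inter>k. merged_row X Y a b m (Suc k))"
    by (subst UNIV_nat_0_Suc) (simp add: image_image)
  then show ?thesis
    by (auto simp: merged_row_def)
qed

(* Points of Y_bm lie in the first entry; outside Y_bm the row lists row b
   of Y.  Either way the union is that of row b of Y. *)
lemma merged_row_Union: "(\<Union>j. merged_row X Y a b m j) = (\<Union>k. Y b k)"
proof -
  have "(\<Union>j. merged_row X Y a b m j) = merged_row X Y a b m 0 \<union> (\<Union>k. merged_row X Y a b m (Suc k))"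
    by (subst UNIV_nat_0_Suc) (simp add: image_image)
  then show ?thesis
    by (auto simp: merged_row_def split: if_splits)
qed

lemma common_Sigma2_Pi2_matrix:
  fixes X Y :: "nat \<Rightarrow> nat \<Rightarrow> 'a set" and D :: "'a set set"
  assumes D_ite: "\<And>A B C. A \<in> D \<Longrightarrow> B \<in> D \<Longrightarrow> C \<in> D \<Longrightarrow> set_ite A B C \<in> D"
    and X_D: "\<forall>i j. X i j \<in> D" and Y_D: "\<forall>i j. Y i j \<in> D"
    and S_X: "S = (\<Union>i. \<Inter>j. X i j)" and S_Y: "S = (\<Inter>i. \<Union>j. Y i j)"
  shows "\<exists>Z :: nat \<Rightarrow> nat \<Rightarrow> 'a set.
           (\<forall>i j. Z i j \<in> D) \<and> S = (\<Union>i. \<Inter>j. Z i j) \<and> S = (\<Inter>i. \<Union>j. Z i j)"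
proof -
  define row where "row q = merged_row X Y (fst q) (fst (snd q)) (snd (snd q))" for q
  define enum :: "nat \<Rightarrow> nat \<times> nat \<times> nat" where "enum i = map_prod id prod_decode (prod_decode i)" for i
  have enum: "surj enum"
    using surj_prod_decode unfolding enum_def
    by (simp add: comp_surj[of prod_decode "map_prod id prod_decode", unfolded comp_def] map_prod_surj)
  define Z where "Z i = row (enum i)" for i
  have Z_D: "Z i j \<in> D" for i j
    using X_D Y_D D_ite by (simp add: Z_def row_def merged_row_def split: nat.split)
  have Z_rows: "(\<Union>i. \<Inter>j. Z i j) = (\<Union>q. \<Inter>j. row q j)"
    "(\<Inter>i. \<Union>j. Z i j) = (\<Inter>q. \<Union>j. row q j)"
    unfolding Z_def
    using UN_surj_reindex[OF enum, of "\<lambda>q. \<Inter>j. row q j"]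
      INT_surj_reindex[OF enum, of "\<lambda>q. \<Union>j. row q j"] by simp_all
  have rows_Inter: "(\<Union>q. \<Inter>j. row q j) = S"
  proof (intro equalityI subsetI)
    fix x assume "x \<in> (\<Union>q. \<Inter>j. row q j)"
    then have "x \<in> (\<Union>a. \<Inter>k. X a k)"
      by (auto simp: row_def merged_row_Inter)
    then show "x \<in> S"
      using S_X by simp
  next
    fix x assume "x \<in> S"
    moreover from this obtain a where "\<forall>k. x \<in> X a k"
      using S_X by blast
    moreover obtain m where "x \<in> Y 0 m"
      using S_Y \<open>x \<in> S\<close> by blast
    ultimately show "x \<in> (\<Union>q. \<Inter>j. row q j)"
      by (intro UN_I[of "(a, 0, m)"]) (auto simp: row_def merged_row_Inter)
  qed
  have rows_Union: "(\<Inter>q. \<Union>j. row q j) = S"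
    using S_Y by (auto simp: row_def merged_row_Union)
  have Z_S: "(\<Union>i. \<Inter>j. Z i j) = S" "(\<Inter>i. \<Union>j. Z i j) = S"
    unfolding Z_rows by (fact rows_Inter rows_Union)+
  show ?thesis
    by (rule exI[where x = Z]) (simp add: Z_D Z_S)
qed

theorem mainTheorem12:
  fixes n :: nat and S :: "baire set" and X Y :: "nat \<Rightarrow> nat \<Rightarrow> baire set"
  assumes "n > 0"
    and "\<forall>i j. X i j \<in> Delta0 n"
    and "\<forall>i j. Y i j \<in> Delta0 n"
    and "S = (\<Union>i. \<Inter>j. X i j)"
    and "S = (\<Inter>i. \<Union>j. Y i j)"
  shows "\<exists>Z :: nat \<Rightarrow> nat \<Rightarrow> baire set. (\<forall>i j. Z i j \<in> Delta0 n) \<and>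
           S = (\<Union>i. \<Inter>j. Z i j) \<and> S = (\<Inter>i. \<Union>j. Z i j)"
  using common_Sigma2_Pi2_matrix[OF Delta0_set_ite assms(2-5)] .

end
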